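(* Let $D$ be a discrete space, $M$ a Hausdorff space, $\pi:D\to M$ any map, and $\kappa$ a cardinal. If the power $M^\kappa$ is countably compact, then the power $(D\cup_\pi M)^\kappa$ is countably compact.
   Context: For a discrete space $D$: if $D$ is infinite, $\alpha D=D\cup\{\infty\}$ denotes its one-point (Aleksandrov) compactification; if $D$ is finite, $\alpha D=D\cup\{\infty\}$ is the topological sum of $D$ and a singleton $\{\infty\}$ with $\infty\notin D$. For a map $\pi:D\to M$ into a $T_1$ space $M$, $D\cup_\pi M$ is the subspace $\{(x,\pi(x)):x\in D\}\cup(\{\infty\}\times M)$ of $\alpha D\times M$. A space is countably compact if every countable open cover has a finite subcover. *)

theory Defs
  imports "HOL-Analysis.Analysis"
begin

definition countably_compact_space :: "'a topology \<Rightarrow> bool" where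
  "countably_compact_space X \<longleftrightarrow>
     (\<forall>\<U>. countable \<U> \<and> (\<forall>U\<in>\<U>. openin X U) \<and> topspace X \<subseteq> \<Union>\<U> \<longrightarrow>
        (\<exists>\<F>. finite \<F> \<and> \<F> \<subseteq> \<U> \<and> topspace X \<subseteq> \<Union>\<F>))"

text \<open>The space alpha D for a discrete space D (carrier the set D), realised on
  the type 'd option: Some x stands for x in D, and None is the extra point infinity.
  For infinite D it is the one-point (Aleksandrov) compactification of the discrete
  space D; for finite D it is the topological sum of D and the singleton {infinity},
  i.e. a finite discrete space.\<close>
definition alpha_space :: "'d set \<Rightarrow> 'd option topology" where
  "alpha_space D =
     (if finite D then discrete_topology (insert None (Some ` D))
      else topology (\<lambda>U. U \<subseteq> insert None (Some ` D) \<and>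
                         (None \<in> U \<longrightarrow> finite (D - Some -` U))))"

definition glued_space :: "'d set \<Rightarrow> ('d \<Rightarrow> 'm) \<Rightarrow> 'm topology \<Rightarrow> ('d option \<times> 'm) topology" where
  "glued_space D \<pi> M =
     subtopology (prod_topology (alpha_space D) M)
       ((\<lambda>x. (Some x, \<pi> x)) ` D \<union> ({None} \<times> topspace M))"

end

theory Submission
  imports Defs
begin

(* A space is countably compact iff every sequence has a cluster point, and a
   point is a cluster point of a sequence x iff x converges to it along some
   ultrafilter finer than the Frechet filter (sequentially).  Ultralimits are
   the right tool for products, because a single ultrafilter can serve all
   coordinates at once.

   Given a sequence f in (D \<union>_\<pi> M)^K, its projection to M^K has a cluster point
   p, hence converges to p along an ultrafilter U.  In every coordinate k, U
   either makes f(-)(k) eventually equal to a point (d, \<pi> d) of the discrete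
   part, or it avoids each such point eventually; in the second case the first
   components tend to the point at infinity of alpha D (whose neighbourhoods
   are cofinite), so f(-)(k) tends to (\<infinity>, p k).  The coordinatewise
   U-limits assemble to a U-limit of f, which is a cluster point of f. *)

definition is_ultrafilter :: "'a filter \<Rightarrow> bool" where
  "is_ultrafilter U \<longleftrightarrow> U \<noteq> bot \<and> (\<forall>P. eventually P U \<or> eventually (\<lambda>x. \<not> P x) U)"

lemma ultrafilter_below:
  fixes F :: "'a filter"
  assumes "F \<noteq> bot"
  obtains U where "U \<le> F" and "is_ultrafilter U"
proof -
  define A where "A = {G. G \<noteq> bot \<and> G \<le> F}"
  have "\<exists>m\<in>A. \<forall>G\<in>A. G \<le> m \<longrightarrow> G = m"
  proof (rule predicate_Zorn)
    show "partial_order_on A (relation_of (\<lambda>G H. H \<le> G) A)"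
      by (rule partial_order_on_relation_ofI) auto
    fix C assume C: "C \<in> Chains (relation_of (\<lambda>G H. H \<le> G) A)"
    then have "C \<subseteq> A" by (rule Chains_relation_of)
    have comparable: "G \<le> H \<or> H \<le> G" if "G \<in> C" "H \<in> C" for G H
      using C that by (auto simp: Chains_def relation_of_def)
    show "\<exists>u\<in>A. \<forall>G\<in>C. u \<le> G"
    proof (cases "C = {}")
      case True
      then show ?thesis using assms by (auto simp: A_def)
    next
      case False
      have "eventually P (Inf C) \<longleftrightarrow> (\<exists>G\<in>C. eventually P G)" for P
        using False by (rule eventually_Inf_base) (meson comparable le_inf_iff order_refl)
      then have "Inf C \<noteq> bot"
        using \<open>C \<subseteq> A\<close> by (auto simp: A_def trivial_limit_def)
      moreover have "Inf C \<le> F"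
        using False \<open>C \<subseteq> A\<close> by (auto simp: A_def intro: Inf_lower2)
      ultimately show ?thesis by (auto simp: A_def intro: Inf_lower)
    qed
  qed
  then obtain m where m: "m \<in> A" and maximal: "\<And>G. G \<in> A \<Longrightarrow> G \<le> m \<Longrightarrow> G = m"
    by blast
  have "eventually P m \<or> eventually (\<lambda>x. \<not> P x) m" for P
  proof (rule disjCI)
    assume "\<not> eventually (\<lambda>x. \<not> P x) m"
    then have "inf m (principal {x. P x}) \<noteq> bot"
      by (simp add: trivial_limit_def eventually_inf_principal)
    then have "inf m (principal {x. P x}) = m"
      using m by (intro maximal) (auto simp: A_def intro: le_infI1)
    moreover have "eventually P (inf m (principal {x. P x}))"
      by (simp add: eventually_inf_principal)
    ultimately show "eventually P m" by simp
  qed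
  with m show thesis
    by (intro that[of m]) (auto simp: A_def is_ultrafilter_def)
qed

definition cluster_point :: "'a topology \<Rightarrow> (nat \<Rightarrow> 'a) \<Rightarrow> 'a \<Rightarrow> bool" where
  "cluster_point X x p \<longleftrightarrow> p \<in> topspace X \<and>
     (\<forall>V. openin X V \<and> p \<in> V \<longrightarrow> frequently (\<lambda>n. x n \<in> V) sequentially)"

(* In a countably compact space every sequence has a cluster point: otherwise
   the complements of the closures of the tails would form a countable open
   cover without finite subcover. *)
lemma countably_compact_space_imp_cluster_point:
  assumes cc: "countably_compact_space X" and x: "\<And>n. x n \<in> topspace X"
  shows "\<exists>p. cluster_point X x p"
proof (rule ccontr)
  assume no_cluster: "\<nexists>p. cluster_point X x p"
  define C where "C N = topspace X - X closure_of (x ` {N..})" for N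
  have C_mono: "C N \<subseteq> C m" if "N \<le> m" for N m
    using that unfolding C_def by (intro Diff_mono closure_of_mono image_mono) auto
  have open_C: "openin X (C N)" for N
    by (simp add: C_def openin_diff)
  have cover_C: "topspace X \<subseteq> \<Union>(range C)"
  proof
    fix p assume p: "p \<in> topspace X"
    have "\<not> cluster_point X x p"
      using no_cluster by blast
    then obtain V where V: "openin X V" "p \<in> V" "\<not> frequently (\<lambda>n. x n \<in> V) sequentially"
      using p by (auto simp: cluster_point_def)
    then obtain N where "\<forall>n\<ge>N. x n \<notin> V"
      by (auto simp: frequently_sequentially)
    then have "p \<notin> X closure_of (x ` {N..})"
      using V by (auto simp: in_closure_of)
    then show "p \<in> \<Union>(range C)"
      using p by (auto simp: C_def)
  qed
  have "\<exists>\<F>. finite \<F> \<and> \<F> \<subseteq> range C \<and> topspace X \<subseteq> \<Union>\<F>"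
    by (rule cc[unfolded countably_compact_space_def, rule_format]) (use open_C cover_C in auto)
  then obtain I where "finite I" and cover: "topspace X \<subseteq> \<Union>(C ` I)"
    by (metis finite_subset_image)
  define m where "m = Max (insert 0 I)"
  note cover
  also have "\<Union>(C ` I) \<subseteq> C m"
    using \<open>finite I\<close> by (intro UN_least C_mono) (simp add: m_def)
  finally have "x m \<in> C m"
    using x by blast
  moreover have "x m \<in> X closure_of (x ` {m..})"
    using x by (intro closure_of_subset[THEN subsetD]) auto
  ultimately show False
    by (simp add: C_def)
qed

(* Conversely, if every sequence has a cluster point the space is countably
   compact: a sequence escaping the first n members of a countable cover
   cannot cluster anywhere. *)
lemma countably_compact_spaceI_cluster_point:
  assumes cluster: "\<And>x. (\<And>n. x n \<in> topspace X) \<Longrightarrow> \<exists>p. cluster_point X x p"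
  shows "countably_compact_space X"
  unfolding countably_compact_space_def
proof (intro allI impI)
  fix \<U> assume \<U>: "countable \<U> \<and> (\<forall>U\<in>\<U>. openin X U) \<and> topspace X \<subseteq> \<Union>\<U>"
  show "\<exists>\<F>. finite \<F> \<and> \<F> \<subseteq> \<U> \<and> topspace X \<subseteq> \<Union>\<F>"
  proof (rule ccontr)
    assume no_finite_subcover: "\<not> ?thesis"
    then have "\<U> \<noteq> {}"
      using \<U> by (metis Union_empty empty_subsetI finite.emptyI)
    define u where "u = from_nat_into \<U>"
    have range_u: "range u = \<U>"
      using \<U> \<open>\<U> \<noteq> {}\<close> by (simp add: u_def)
    have "\<exists>y. y \<in> topspace X \<and> y \<notin> \<Union>(u ` {..n})" for n
    proof -
      have "finite (u ` {..n})" "u ` {..n} \<subseteq> \<U>"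
        using range_u by auto
      then show ?thesis
        using no_finite_subcover by blast
    qed
    then obtain x where x: "\<And>n. x n \<in> topspace X" "\<And>n. x n \<notin> \<Union>(u ` {..n})"
      by metis
    obtain p where p: "cluster_point X x p"
      using cluster x(1) by blast
    then obtain m where "p \<in> u m"
      using \<U> range_u by (auto simp: cluster_point_def)
    moreover have "openin X (u m)"
      using \<U> range_u by blast
    ultimately have "frequently (\<lambda>n. x n \<in> u m) sequentially"
      using p by (auto simp: cluster_point_def)
    then obtain n where "n \<ge> m" "x n \<in> u m"
      by (auto simp: frequently_sequentially)
    then show False
      using x(2)[of n] by auto
  qed
qed

lemma cluster_point_iff_ultralimit:
  "cluster_point X x p \<longleftrightarrow> (\<exists>U. is_ultrafilter U \<and> U \<le> sequentially \<and> limitin X x p U)"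
proof
  assume p: "cluster_point X x p"
  define F where "F = inf (filtercomap x (nhdsin X p)) sequentially"
  have "F \<noteq> bot"
  proof
    assume "F = bot"
    then obtain P Q where P: "eventually P (filtercomap x (nhdsin X p))"
        and Q: "eventually Q sequentially" and disjoint: "\<And>n. P n \<Longrightarrow> Q n \<Longrightarrow> False"
      unfolding F_def trivial_limit_def eventually_inf by blast
    from P obtain R where R: "eventually R (nhdsin X p)" "\<And>n. R (x n) \<Longrightarrow> P n"
      by (auto simp: eventually_filtercomap)
    from R(1) p obtain S where S: "openin X S" "p \<in> S" "\<And>y. y \<in> S \<Longrightarrow> R y"
      by (auto simp: eventually_nhdsin cluster_point_def)
    from Q obtain N where N: "\<And>n. n \<ge> N \<Longrightarrow> Q n"
      by (auto simp: eventually_sequentially)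
    have "frequently (\<lambda>n. x n \<in> S) sequentially"
      using p S by (auto simp: cluster_point_def)
    then obtain n where "n \<ge> N" "x n \<in> S"
      by (auto simp: frequently_sequentially)
    then show False
      using disjoint N R(2) S(3) by blast
  qed
  then obtain U where "U \<le> F" "is_ultrafilter U"
    by (rule ultrafilter_below)
  moreover have "limitin X x p U"
    unfolding limitin_def
  proof (intro conjI allI impI)
    show "p \<in> topspace X" using p by (simp add: cluster_point_def)
    fix V assume "openin X V \<and> p \<in> V"
    then have "eventually (\<lambda>n. x n \<in> V) (filtercomap x (nhdsin X p))"
      by (intro eventually_filtercomapI) (auto simp: eventually_nhdsin)
    then show "eventually (\<lambda>n. x n \<in> V) U"
      using \<open>U \<le> F\<close> by (auto simp: F_def dest: filter_leD le_infE)
  qed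
  moreover have "U \<le> sequentially"
    using \<open>U \<le> F\<close> by (simp add: F_def)
  ultimately show "\<exists>U. is_ultrafilter U \<and> U \<le> sequentially \<and> limitin X x p U"
    by blast
next
  assume "\<exists>U. is_ultrafilter U \<and> U \<le> sequentially \<and> limitin X x p U"
  then obtain U where U: "U \<noteq> bot" "U \<le> sequentially" and lim: "limitin X x p U"
    by (auto simp: is_ultrafilter_def)
  have "frequently (\<lambda>n. x n \<in> V) sequentially" if "openin X V" "p \<in> V" for V
  proof -
    have "frequently (\<lambda>n. x n \<in> V) U"
      using lim that U(1) by (intro eventually_frequently) (auto simp: limitin_def)
    then show ?thesis
      using U(2) by (auto simp: frequently_def le_filter_def)
  qed
  then show "cluster_point X x p"
    using lim by (simp add: cluster_point_def limitin_def)
qed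

lemma alpha_space_props:
  shows topspace_alpha_space: "topspace (alpha_space D) = insert None (Some ` D)"
    and openin_alpha_space_infinity:
      "openin (alpha_space D) V \<Longrightarrow> None \<in> V \<Longrightarrow> finite (D - Some -` V)"
proof -
  let ?C = "insert None (Some ` D)"
  let ?P = "\<lambda>U. U \<subseteq> ?C \<and> (None \<in> U \<longrightarrow> finite (D - Some -` U))"
  have "topspace (alpha_space D) = ?C \<and>
        (openin (alpha_space D) V \<longrightarrow> None \<in> V \<longrightarrow> finite (D - Some -` V))"
  proof (cases "finite D")
    case True
    then show ?thesis by (simp add: alpha_space_def)
  next
    case False
    have "istopology ?P"
      unfolding istopology_def
    proof (rule conjI; intro allI impI)
      fix S T assume "?P S" "?P T"
      moreover have "D - Some -` (S \<inter> T) = (D - Some -` S) \<union> (D - Some -` T)" by auto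
      ultimately show "?P (S \<inter> T)" by auto
    next
      fix \<K> assume \<K>: "\<forall>K\<in>\<K>. ?P K"
      show "?P (\<Union>\<K>)"
      proof (intro conjI impI)
        show "\<Union>\<K> \<subseteq> ?C" using \<K> by blast
        assume "None \<in> \<Union>\<K>"
        then obtain K where K: "K \<in> \<K>" "None \<in> K" by blast
        then have "D - Some -` \<Union>\<K> \<subseteq> D - Some -` K" by auto
        moreover have "finite (D - Some -` K)" using \<K> K by blast
        ultimately show "finite (D - Some -` \<Union>\<K>)" by (rule finite_subset)
      qed
    qed
    then have openin: "openin (alpha_space D) = ?P"
      using False by (simp add: alpha_space_def)
    have "D - Some -` ?C = {}" by auto
    then have "?P ?C"
      by (metis finite.emptyI subset_refl)
    then have "openin (alpha_space D) ?C"
      unfolding openin by assumption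
    then have "?C \<subseteq> topspace (alpha_space D)"
      by (rule openin_subset)
    moreover have "topspace (alpha_space D) \<subseteq> ?C"
      using openin_topspace[of "alpha_space D"] by (simp add: openin)
    ultimately show ?thesis
      using openin by auto
  qed
  then show "topspace (alpha_space D) = ?C"
    and "openin (alpha_space D) V \<Longrightarrow> None \<in> V \<Longrightarrow> finite (D - Some -` V)"
    by auto
qed

lemma limitin_alpha_space_infinity:
  assumes in_space: "eventually (\<lambda>n. s n \<in> topspace (alpha_space D)) F"
    and avoids: "\<And>d. d \<in> D \<Longrightarrow> eventually (\<lambda>n. s n \<noteq> Some d) F"
  shows "limitin (alpha_space D) s None F"
  unfolding limitin_def
proof (intro conjI allI impI)
  show "None \<in> topspace (alpha_space D)" by (simp add: topspace_alpha_space)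
  fix V assume V: "openin (alpha_space D) V \<and> None \<in> V"
  then have "finite (D - Some -` V)"
    by (auto intro: openin_alpha_space_infinity)
  then have "eventually (\<lambda>n. \<forall>d\<in>D - Some -` V. s n \<noteq> Some d) F"
    using avoids by (intro eventually_ball_finite) auto
  with in_space show "eventually (\<lambda>n. s n \<in> V) F"
    by eventually_elim (use V in \<open>auto simp: topspace_alpha_space\<close>)
qed

lemma ultralimit_glued_space:
  assumes U: "is_ultrafilter U"
    and in_space: "eventually (\<lambda>n. h n \<in> topspace (glued_space D \<pi> M)) U"
    and snd_lim: "limitin M (\<lambda>n. snd (h n)) m U"
  shows "\<exists>q. limitin (glued_space D \<pi> M) h q U"
proof -
  let ?S = "(\<lambda>d. (Some d, \<pi> d)) ` D \<union> ({None} \<times> topspace M)"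
  have S: "eventually (\<lambda>n. h n \<in> topspace (prod_topology (alpha_space D) M) \<and> h n \<in> ?S) U"
    using in_space by (simp add: glued_space_def)
  show ?thesis
  proof (cases "\<exists>d\<in>D. eventually (\<lambda>n. h n = (Some d, \<pi> d)) U")
    case True
    then obtain d where eventually_d: "eventually (\<lambda>n. h n = (Some d, \<pi> d)) U"
      by blast
    have "\<exists>n. h n = (Some d, \<pi> d) \<and> h n \<in> topspace (glued_space D \<pi> M)"
      using U eventually_conj[OF eventually_d in_space]
      by (intro eventually_happens') (auto simp: is_ultrafilter_def)
    with eventually_d have "limitin (glued_space D \<pi> M) h (Some d, \<pi> d) U"
      by (intro limitin_eventually) auto
    then show ?thesis by blast
  next
    case False
    then have avoids: "eventually (\<lambda>n. h n \<noteq> (Some d, \<pi> d)) U" if "d \<in> D" for d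
      using U that by (auto simp: is_ultrafilter_def)
    have "limitin (alpha_space D) (\<lambda>n. fst (h n)) None U"
    proof (rule limitin_alpha_space_infinity)
      show "eventually (\<lambda>n. fst (h n) \<in> topspace (alpha_space D)) U"
        using S by eventually_elim auto
      show "eventually (\<lambda>n. fst (h n) \<noteq> Some d) U" if "d \<in> D" for d
        using S avoids[OF that] by eventually_elim auto
    qed
    with snd_lim have "limitin (prod_topology (alpha_space D) M) h (None, m) U"
      by (simp add: limitin_pairwise o_def)
    moreover have "(None, m) \<in> ?S"
      using limitin_topspace[OF snd_lim] by simp
    moreover have "eventually (\<lambda>n. h n \<in> ?S) U"
      using S by (rule eventually_mono) simp
    ultimately have "limitin (glued_space D \<pi> M) h (None, m) U"
      by (simp add: glued_space_def limitin_subtopology)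
    then show ?thesis by blast
  qed
qed

lemma ex_limitin_product_topology:
  assumes "eventually (\<lambda>n. f n \<in> topspace (product_topology X K)) F"
    and "\<And>k. k \<in> K \<Longrightarrow> \<exists>q. limitin (X k) (\<lambda>n. f n k) q F"
  shows "\<exists>q. limitin (product_topology X K) f q F"
proof -
  define q where "q = (\<lambda>k\<in>K. SOME q. limitin (X k) (\<lambda>n. f n k) q F)"
  have "limitin (X k) (\<lambda>n. f n k) (q k) F" if "k \<in> K" for k
    using someI_ex[OF assms(2)[OF that]] that by (simp add: q_def)
  then have "limitin (product_topology X K) f q F"
    using assms(1) by (simp add: limitin_componentwise q_def)
  then show ?thesis by blast
qed

theorem proposition1p4:
  fixes D :: "'d set" and M :: "'m topology" and \<pi> :: "'d \<Rightarrow> 'm" and K :: "'k set"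
  assumes "Hausdorff_space M"
    and "\<pi> \<in> D \<rightarrow> topspace M"
    and "countably_compact_space (product_topology (\<lambda>_. M) K)"
  shows "countably_compact_space (product_topology (\<lambda>_. glued_space D \<pi> M) K)"
proof (rule countably_compact_spaceI_cluster_point)
  let ?G = "glued_space D \<pi> M"
  fix f :: "nat \<Rightarrow> 'k \<Rightarrow> 'd option \<times> 'm"
  assume f: "\<And>n. f n \<in> topspace (product_topology (\<lambda>_. ?G) K)"
  then have f_space: "f n k \<in> topspace ?G" if "k \<in> K" for n k
    using that by (auto simp: PiE_iff)
  have "continuous_map ?G M snd"
    unfolding glued_space_def by (intro continuous_map_from_subtopology continuous_map_snd)
  then have snd_space: "snd z \<in> topspace M" if "z \<in> topspace ?G" for z
    using that continuous_map_image_subset_topspace by blast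
  define g where "g n = (\<lambda>k\<in>K. snd (f n k))" for n
  have "g n \<in> topspace (product_topology (\<lambda>_. M) K)" for n
    using f_space snd_space by (auto simp: g_def)
  then obtain p where "cluster_point (product_topology (\<lambda>_. M) K) g p"
    using countably_compact_space_imp_cluster_point[OF assms(3)] by blast
  then obtain U where U: "is_ultrafilter U" "U \<le> sequentially"
    and "limitin (product_topology (\<lambda>_. M) K) g p U"
    by (auto simp: cluster_point_iff_ultralimit)
  then have "limitin M (\<lambda>n. snd (f n k)) (p k) U" if "k \<in> K" for k
    using that by (auto simp: limitin_componentwise g_def)
  then have "\<exists>q. limitin ?G (\<lambda>n. f n k) q U" if "k \<in> K" for k
    using that f_space by (intro ultralimit_glued_space[OF U(1)]) auto
  moreover have "eventually (\<lambda>n. f n \<in> topspace (product_topology (\<lambda>_. ?G) K)) U"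
    using f by simp
  ultimately obtain q where "limitin (product_topology (\<lambda>_. ?G) K) f q U"
    using ex_limitin_product_topology by blast
  then show "\<exists>q. cluster_point (product_topology (\<lambda>_. ?G) K) f q"
    using U by (auto simp: cluster_point_iff_ultralimit)
qed

end
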